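(* Let $q \geq 1$ and let $k$ be a positive integer with $k < n$. Let $\boldsymbol{B}$ be a dictionary as described in the context, and assume that every signal $\boldsymbol{y}\in\mathbb{R}^D$ that admits a $k$-block-sparse representation admits a unique one. If $$\zeta_k + \zeta_{k-1} < \frac{1-\epsilon'_q}{1+\epsilon'_q},$$ then for every $\Lambda_k\subseteq\{1,\dots,n\}$ with $|\Lambda_k|=k$ and every $\boldsymbol{y}\in\bigoplus_{i\in\Lambda_k}\mathcal{S}_i$, every optimal solution $\boldsymbol{c}^*$ of $P'_{\ell_q/\ell_1}(\boldsymbol{y})$ satisfies $\boldsymbol{B}[i]\boldsymbol{c}^*[i]=\boldsymbol{0}$ for all $i\notin\Lambda_k$; i.e. the solution of $P'_{\ell_q/\ell_1}$ is equivalent to that of $P'_{\ell_q/\ell_0}$.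
   Context: $\boldsymbol{B} = [\boldsymbol{B}[1]\ \cdots\ \boldsymbol{B}[n]] \in \mathbb{R}^{D\times N}$ has unit-Euclidean-norm columns, blocks $\boldsymbol{B}[i] \in \mathbb{R}^{D\times m_i}$ (possibly with linearly dependent columns); $\mathcal{S}_i = \operatorname{span}(\boldsymbol{B}[i])$, and $\mathcal{S}_i\cap\mathcal{S}_j = \{0\}$ for $i\ne j$. Vectors $\boldsymbol{c}\in\mathbb{R}^N$ are written $(\boldsymbol{c}[1];\dots;\boldsymbol{c}[n])$, $\boldsymbol{c}[i]\in\mathbb{R}^{m_i}$. A $k$-block-sparse representation of $\boldsymbol{y}$ is $\boldsymbol{y}=\sum_{i\in\Lambda}\boldsymbol{s}_i$ with $|\Lambda|\le k$, $\boldsymbol{s}_i\in\mathcal{S}_i\setminus\{0\}$; uniqueness means any two have the same $\Lambda$ and the same $\boldsymbol{s}_i$. $P'_{\ell_q/\ell_1}(\boldsymbol{y})$: $\min\sum_i\|\boldsymbol{B}[i]\boldsymbol{c}[i]\|_q$ s.t. $\boldsymbol{y}=\boldsymbol{B}\boldsymbol{c}$; $P'_{\ell_q/\ell_0}(\boldsymbol{y})$: minimize $\#\{i:\boldsymbol{B}[i]\boldsymbol{c}[i]\ne 0\}$ s.t. $\boldsymbol{y}=\boldsymbol{B}\boldsymbol{c}$. Subspace coherence: $\mu(\mathcal{S}_i,\mathcal{S}_j)=\max_{0\ne\boldsymbol{x}\in\mathcal{S}_i,\,0\ne\boldsymbol{z}\in\mathcal{S}_j}\frac{|\boldsymbol{x}^\top\boldsymbol{z}|}{\|\boldsymbol{x}\|_2\|\boldsymbol{z}\|_2}$.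 $\zeta_k=\max_{\Lambda_k}\max_{i\notin\Lambda_k}\sum_{j\in\Lambda_k}\mu(\mathcal{S}_i,\mathcal{S}_j)$ over all $k$-element subsets $\Lambda_k\subseteq\{1,\dots,n\}$, with $\zeta_0=0$. $\epsilon'_q$: the smallest constant such that $(1-\epsilon'_q)\|\boldsymbol{B}[i]\boldsymbol{c}[i]\|_q^2\le\|\boldsymbol{B}[i]\boldsymbol{c}[i]\|_2^2\le(1+\epsilon'_q)\|\boldsymbol{B}[i]\boldsymbol{c}[i]\|_q^2$ for all $i$ and all $\boldsymbol{c}[i]$. *)

theory Defs
  imports "HOL-Analysis.Analysis"
begin

text \<open>A block dictionary: n blocks, block i has m i columns b i 0, ..., b i (m i - 1)
  in R^D (modelled as real^'d).  Coefficients are c :: nat => nat => real,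
  c i j being the j-th entry of c[i].\<close>

definition blockvec :: "(nat \<Rightarrow> nat \<Rightarrow> real^'d) \<Rightarrow> (nat \<Rightarrow> nat) \<Rightarrow> nat \<Rightarrow> (nat \<Rightarrow> real) \<Rightarrow> real^'d" where
  "blockvec b m i ci = (\<Sum>j<m i. ci j *\<^sub>R b i j)"

definition subsp :: "(nat \<Rightarrow> nat \<Rightarrow> real^'d) \<Rightarrow> (nat \<Rightarrow> nat) \<Rightarrow> nat \<Rightarrow> (real^'d) set" where
  "subsp b m i = span (b i ` {..<m i})"

definition lq_norm :: "real \<Rightarrow> real^'d \<Rightarrow> real" where
  "lq_norm q x = (\<Sum>k\<in>UNIV. \<bar>x $ k\<bar> powr q) powr (1 / q)"

definition dict_synth :: "(nat \<Rightarrow> nat \<Rightarrow> real^'d) \<Rightarrow> (nat \<Rightarrow> nat) \<Rightarrow> nat \<Rightarrow> (nat \<Rightarrow> nat \<Rightarrow> real) \<Rightarrow> real^'d" where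
  "dict_synth b m n c = (\<Sum>i<n. blockvec b m i (c i))"

text \<open>Subspace coherence (maximum of |x.z|/(|x||z|); attained, and the value 0 is
  included only so that the Sup is well defined).\<close>
definition sub_coh :: "(real^'d) set \<Rightarrow> (real^'d) set \<Rightarrow> real" where
  "sub_coh S T = Sup ({\<bar>x \<bullet> z\<bar> / (norm x * norm z) | x z. x \<in> S \<and> x \<noteq> 0 \<and> z \<in> T \<and> z \<noteq> 0} \<union> {0})"

definition zeta :: "(nat \<Rightarrow> nat \<Rightarrow> real^'d) \<Rightarrow> (nat \<Rightarrow> nat) \<Rightarrow> nat \<Rightarrow> nat \<Rightarrow> real" where
  "zeta b m n k = (if k = 0 then 0 else
     Max {(\<Sum>j\<in>L. sub_coh (subsp b m i) (subsp b m j)) | L i.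
            L \<subseteq> {..<n} \<and> card L = k \<and> i < n \<and> i \<notin> L})"

definition eps_q :: "(nat \<Rightarrow> nat \<Rightarrow> real^'d) \<Rightarrow> (nat \<Rightarrow> nat) \<Rightarrow> nat \<Rightarrow> real \<Rightarrow> real" where
  "eps_q b m n q = Inf {e. \<forall>i<n. \<forall>ci.
      (1 - e) * (lq_norm q (blockvec b m i ci))\<^sup>2 \<le> (norm (blockvec b m i ci))\<^sup>2 \<and>
      (norm (blockvec b m i ci))\<^sup>2 \<le> (1 + e) * (lq_norm q (blockvec b m i ci))\<^sup>2}"

definition ksparse_rep :: "(nat \<Rightarrow> nat \<Rightarrow> real^'d) \<Rightarrow> (nat \<Rightarrow> nat) \<Rightarrow> nat \<Rightarrow> nat \<Rightarrow> real^'d \<Rightarrow> nat set \<Rightarrow> (nat \<Rightarrow> real^'d) \<Rightarrow> bool" where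
  "ksparse_rep b m n k y L s \<longleftrightarrow> L \<subseteq> {..<n} \<and> card L \<le> k \<and>
     (\<forall>i\<in>L. s i \<in> subsp b m i \<and> s i \<noteq> 0) \<and> y = (\<Sum>i\<in>L. s i)"

definition unique_ksparse :: "(nat \<Rightarrow> nat \<Rightarrow> real^'d) \<Rightarrow> (nat \<Rightarrow> nat) \<Rightarrow> nat \<Rightarrow> nat \<Rightarrow> bool" where
  "unique_ksparse b m n k \<longleftrightarrow> (\<forall>y L s L' s'. ksparse_rep b m n k y L s \<and> ksparse_rep b m n k y L' s'
      \<longrightarrow> L = L' \<and> (\<forall>i\<in>L. s i = s' i))"

definition opt_lq_l1 :: "(nat \<Rightarrow> nat \<Rightarrow> real^'d) \<Rightarrow> (nat \<Rightarrow> nat) \<Rightarrow> nat \<Rightarrow> real \<Rightarrow> real^'d \<Rightarrow> (nat \<Rightarrow> nat \<Rightarrow> real) \<Rightarrow> bool" where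
  "opt_lq_l1 b m n q y c \<longleftrightarrow> y = dict_synth b m n c \<and>
     (\<forall>c'. y = dict_synth b m n c' \<longrightarrow>
        (\<Sum>i<n. lq_norm q (blockvec b m i (c i))) \<le> (\<Sum>i<n. lq_norm q (blockvec b m i (c' i))))"

end

theory Submission
  imports Defs
begin

text \<open>Let \<open>s\<close> represent \<open>y\<close> on \<open>\<Lambda>\<close> and let \<open>h\<close> be the blockwise difference between the
  optimal \<open>c\<^sup>*\<close> and \<open>s\<close>, so that \<open>\<Sum>\<^sub>i h\<^sub>i = 0\<close>. Optimality of \<open>c\<^sup>*\<close> and the triangle inequality
  for \<open>\<parallel>\<cdot>\<parallel>\<^sub>q\<close> bound the \<open>\<ell>\<^sub>q/\<ell>\<^sub>1\<close> mass of \<open>h\<close> off \<open>\<Lambda>\<close> by its mass on \<open>\<Lambda>\<close>. On the other hand,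
  writing each \<open>h\<^sub>i\<close> (\<open>i \<in> \<Lambda>\<close>) as minus the sum of the other blocks and using subspace
  coherence gives \<open>\<Sum>\<^sub>\<Lambda> \<parallel>h\<^sub>i\<parallel>\<^sub>2 \<le> \<zeta>\<^sub>k\<^sub>-\<^sub>1 \<Sum>\<^sub>\<Lambda> \<parallel>h\<^sub>i\<parallel>\<^sub>2 + \<zeta>\<^sub>k \<Sum>\<^sub>\<Lambda>\<^sub>c \<parallel>h\<^sub>i\<parallel>\<^sub>2\<close>. Converting between
  \<open>\<ell>\<^sub>2\<close> and \<open>\<ell>\<^sub>q\<close> norms with \<open>\<epsilon>'\<^sub>q\<close>, the two bounds are compatible under the hypothesis on
  \<open>\<zeta>\<^sub>k + \<zeta>\<^sub>k\<^sub>-\<^sub>1\<close> only if \<open>h = 0\<close>.\<close>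

lemma lq_norm_nonneg: "lq_norm q x \<ge> 0"
  by (simp add: lq_norm_def)

lemma abs_component_le_lq_norm:
  fixes x :: "real^'d" assumes q: "q \<ge> 1"
  shows "\<bar>x $ k\<bar> \<le> lq_norm q x"
proof -
  have "\<bar>x $ k\<bar> = (\<bar>x $ k\<bar> powr q) powr (1/q)" using q by (simp add: powr_powr)
  also have "\<dots> \<le> (\<Sum>k\<in>UNIV. \<bar>x $ k\<bar> powr q) powr (1 / q)"
    by (rule powr_mono2) (use q in \<open>auto intro!: member_le_sum\<close>)
  finally show ?thesis by (simp add: lq_norm_def)
qed

lemma lq_norm_eq_0_iff:
  fixes x :: "real^'d" assumes q: "q \<ge> 1"
  shows "lq_norm q x = 0 \<longleftrightarrow> x = 0"
proof
  assume "lq_norm q x = 0"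
  then have "\<bar>x $ k\<bar> = 0" for k
    using abs_component_le_lq_norm[OF q, of x k] by simp
  then show "x = 0" by (simp add: vec_eq_iff)
qed (simp add: lq_norm_def)

lemma lq_norm_scaleR:
  fixes x :: "real^'d" assumes q: "q \<ge> 1"
  shows "lq_norm q (c *\<^sub>R x) = \<bar>c\<bar> * lq_norm q x"
proof -
  have "(\<Sum>k\<in>UNIV. \<bar>(c *\<^sub>R x) $ k\<bar> powr q) = \<bar>c\<bar> powr q * (\<Sum>k\<in>UNIV. \<bar>x $ k\<bar> powr q)"
    by (simp add: abs_mult powr_mult sum_distrib_left)
  then have "lq_norm q (c *\<^sub>R x) = (\<bar>c\<bar> powr q) powr (1/q) * lq_norm q x"
    by (simp add: lq_norm_def powr_mult)
  also have "(\<bar>c\<bar> powr q) powr (1/q) = \<bar>c\<bar>" using q by (simp add: powr_powr)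
  finally show ?thesis .
qed

lemma lq_norm_powr:
  fixes x :: "real^'d" assumes q: "q \<ge> 1"
  shows "lq_norm q x powr q = (\<Sum>k\<in>UNIV. \<bar>x $ k\<bar> powr q)"
  using q by (simp add: lq_norm_def powr_powr sum_nonneg)

lemma convex_on_powr_nonneg:
  assumes p: "p \<ge> 1" shows "convex_on {0..} (\<lambda>x::real. x powr p)"
proof (rule convex_on_linorderI)
  fix t x y :: real
  assume t: "0 < t" "t < 1" and xy: "x \<in> {0..}" "y \<in> {0..}" "x < y"
  show "((1 - t) *\<^sub>R x + t *\<^sub>R y) powr p \<le> (1 - t) * x powr p + t * y powr p"
  proof (cases "x = 0")
    case True
    have "t powr p = t * t powr (p - 1)" using t by (simp add: powr_diff)
    also have "\<dots> \<le> t" using t p by (simp add: mult_left_le powr_le1)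
    finally have "t powr p * y powr p \<le> t * y powr p" by (simp add: mult_right_mono)
    then show ?thesis using True by (simp add: powr_mult)
  next
    case False
    with xy have "x \<in> {0<..}" "y \<in> {0<..}" by auto
    with convex_onD[OF powr_convex[OF p], of t x y] t show ?thesis by simp
  qed
qed simp

lemma convex_on_sum_abs_powr:
  assumes q: "q \<ge> 1"
  shows "convex_on UNIV (\<lambda>x::real^'d. \<Sum>k\<in>UNIV. \<bar>x $ k\<bar> powr q)"
proof (rule convex_onI)
  fix t :: real and x y :: "real^'d" assume t: "0 < t" "t < 1"
  have "\<bar>((1 - t) *\<^sub>R x + t *\<^sub>R y) $ k\<bar> powr q
        \<le> (1 - t) * \<bar>x $ k\<bar> powr q + t * \<bar>y $ k\<bar> powr q" for k
  proof -
    have "\<bar>(1 - t) * x $ k + t * y $ k\<bar> \<le> (1 - t) * \<bar>x $ k\<bar> + t * \<bar>y $ k\<bar>"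
      using abs_triangle_ineq[of "(1 - t) * x $ k" "t * y $ k"] t by (simp add: abs_mult)
    then have "\<bar>((1 - t) *\<^sub>R x + t *\<^sub>R y) $ k\<bar> powr q \<le> ((1 - t) * \<bar>x $ k\<bar> + t * \<bar>y $ k\<bar>) powr q"
      using q by (intro powr_mono2) auto
    also have "\<dots> \<le> (1 - t) * \<bar>x $ k\<bar> powr q + t * \<bar>y $ k\<bar> powr q"
      using convex_onD[OF convex_on_powr_nonneg[OF q], of t "\<bar>x $ k\<bar>" "\<bar>y $ k\<bar>"] t
      by (simp add: algebra_simps)
    finally show ?thesis .
  qed
  then show "(\<Sum>k\<in>UNIV. \<bar>((1 - t) *\<^sub>R x + t *\<^sub>R y) $ k\<bar> powr q)
      \<le> (1 - t) * (\<Sum>k\<in>UNIV. \<bar>x $ k\<bar> powr q) + t * (\<Sum>k\<in>UNIV. \<bar>y $ k\<bar> powr q)"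
    by (simp add: sum_mono sum_distrib_left flip: sum.distrib)
qed simp

text \<open>\<open>(x + y) / (\<parallel>x\<parallel>\<^sub>q + \<parallel>y\<parallel>\<^sub>q)\<close> is a convex combination of the unit vectors
  \<open>x / \<parallel>x\<parallel>\<^sub>q\<close> and \<open>y / \<parallel>y\<parallel>\<^sub>q\<close>, on which the convex function \<open>\<Sum>\<^sub>k \<bar>x\<^sub>k\<bar>\<^sup>q\<close> equals 1.\<close>
lemma lq_norm_triangle:
  fixes x y :: "real^'d" assumes q: "q \<ge> 1"
  shows "lq_norm q (x + y) \<le> lq_norm q x + lq_norm q y"
proof -
  define a where "a = lq_norm q x"
  define b where "b = lq_norm q y"
  consider "x = 0" | "y = 0" | "a > 0" "b > 0"
    using lq_norm_eq_0_iff[OF q] lq_norm_nonneg a_def b_def by (metis less_eq_real_def)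
  then show ?thesis
  proof cases
    case 3
    define t where "t = b / (a + b)"
    have t: "0 \<le> t" "t \<le> 1" using 3 by (auto simp: t_def)
    define u where "u = (1/a) *\<^sub>R x"
    define v where "v = (1/b) *\<^sub>R y"
    have "lq_norm q u = 1" "lq_norm q v = 1"
      using 3 by (simp_all add: u_def v_def lq_norm_scaleR[OF q] a_def b_def)
    then have sum_u: "(\<Sum>k\<in>UNIV. \<bar>u $ k\<bar> powr q) = 1" and sum_v: "(\<Sum>k\<in>UNIV. \<bar>v $ k\<bar> powr q) = 1"
      using lq_norm_powr[OF q, of u] lq_norm_powr[OF q, of v] by simp_all
    have comb: "(1 - t) *\<^sub>R u + t *\<^sub>R v = (1 / (a + b)) *\<^sub>R (x + y)"
      using 3 by (simp add: t_def u_def v_def scaleR_add_right field_simps)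
    have "(\<Sum>k\<in>UNIV. \<bar>((1 / (a + b)) *\<^sub>R (x + y)) $ k\<bar> powr q) \<le> 1"
      using convex_onD[OF convex_on_sum_abs_powr[OF q], of t u v] t sum_u sum_v
      unfolding comb by simp
    then have "lq_norm q ((1 / (a + b)) *\<^sub>R (x + y)) \<le> 1 powr (1/q)"
      unfolding lq_norm_def using q by (intro powr_mono2) (auto intro: sum_nonneg)
    then have "lq_norm q (x + y) / (a + b) \<le> 1" using 3 by (simp add: lq_norm_scaleR[OF q])
    then show ?thesis using 3 by (simp add: a_def b_def field_simps)
  qed (use lq_norm_nonneg in auto)
qed

lemma subsp_eq_range_blockvec: "subsp b m i = range (blockvec b m i)"
proof
  show "range (blockvec b m i) \<subseteq> subsp b m i"
    unfolding subsp_def blockvec_def by (blast intro: span_sum span_scale span_base)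
  have "subspace (range (blockvec b m i))"
    unfolding subspace_def
  proof (intro conjI ballI allI)
    show "0 \<in> range (blockvec b m i)"
      by (rule range_eqI[of _ _ "\<lambda>_. 0"]) (simp add: blockvec_def)
  next
    fix x y assume "x \<in> range (blockvec b m i)" "y \<in> range (blockvec b m i)"
    then obtain c d where "x = blockvec b m i c" "y = blockvec b m i d" by auto
    then show "x + y \<in> range (blockvec b m i)"
      by (intro range_eqI[of _ _ "\<lambda>j. c j + d j"]) (simp add: blockvec_def sum.distrib scaleR_add_left)
  next
    fix r x assume "x \<in> range (blockvec b m i)"
    then obtain c where "x = blockvec b m i c" by auto
    then show "r *\<^sub>R x \<in> range (blockvec b m i)"
      by (intro range_eqI[of _ _ "\<lambda>j. r * c j"]) (simp add: blockvec_def scaleR_sum_right)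
  qed
  moreover have "b i j \<in> range (blockvec b m i)" if "j < m i" for j
  proof -
    have "blockvec b m i (\<lambda>l. if l = j then 1 else 0) = b i j"
      using that unfolding blockvec_def by (simp add: if_distrib[of "\<lambda>r. r *\<^sub>R b i _"] cong: if_cong)
    then show ?thesis by (metis rangeI)
  qed
  ultimately show "subsp b m i \<subseteq> range (blockvec b m i)"
    unfolding subsp_def by (intro span_minimal) auto
qed

lemma bdd_above_sub_coh_set:
  "bdd_above ({\<bar>x \<bullet> z\<bar> / (norm x * norm z) | x z. x \<in> S \<and> x \<noteq> 0 \<and> z \<in> T \<and> z \<noteq> 0} \<union> {0})"
proof (rule bdd_aboveI[of _ 1])
  fix r assume "r \<in> {\<bar>x \<bullet> z\<bar> / (norm x * norm z) | x z. x \<in> S \<and> x \<noteq> 0 \<and> z \<in> T \<and> z \<noteq> 0} \<union> {0}"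
  then show "r \<le> 1"
    by (auto simp: divide_le_eq_1 Cauchy_Schwarz_ineq2)
qed

lemma sub_coh_nonneg: "sub_coh S T \<ge> 0"
  unfolding sub_coh_def by (rule cSup_upper[OF _ bdd_above_sub_coh_set]) simp

lemma abs_inner_le_sub_coh:
  assumes "x \<in> S" "z \<in> T"
  shows "\<bar>x \<bullet> z\<bar> \<le> sub_coh S T * norm x * norm z"
proof (cases "x = 0 \<or> z = 0")
  case False
  then have pos: "norm x * norm z > 0" by simp
  have "\<bar>x \<bullet> z\<bar> / (norm x * norm z) \<le> sub_coh S T"
    unfolding sub_coh_def by (rule cSup_upper[OF _ bdd_above_sub_coh_set]) (use assms False in blast)
  with pos show ?thesis by (simp add: pos_divide_le_eq mult.assoc)
qed auto

lemma sum_sub_coh_le_zeta: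
  assumes "0 < K" "L \<subseteq> {..<n}" "card L = K" "i < n" "i \<notin> L"
  shows "(\<Sum>j\<in>L. sub_coh (subsp b m i) (subsp b m j)) \<le> zeta b m n K"
proof -
  let ?Z = "{(\<Sum>j\<in>L. sub_coh (subsp b m i) (subsp b m j)) | L i.
            L \<subseteq> {..<n} \<and> card L = K \<and> i < n \<and> i \<notin> L}"
  have "?Z \<subseteq> (\<lambda>(L, i). \<Sum>j\<in>L. sub_coh (subsp b m i) (subsp b m j)) ` (Pow {..<n} \<times> {..<n})"
    by auto
  then have "finite ?Z" by (rule finite_subset) auto
  then show ?thesis using assms by (auto simp: zeta_def intro!: Max_ge)
qed

lemma zeta_nonneg:
  assumes "K < n" shows "zeta b m n K \<ge> 0"
proof (cases "K = 0")
  case False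
  have "0 \<le> (\<Sum>j<K. sub_coh (subsp b m K) (subsp b m j))"
    by (intro sum_nonneg sub_coh_nonneg)
  also have "\<dots> \<le> zeta b m n K" using assms False by (intro sum_sub_coh_le_zeta) auto
  finally show ?thesis .
qed (simp add: zeta_def)

lemma eps_q_bounds:
  fixes b :: "nat \<Rightarrow> nat \<Rightarrow> real^'d"
  assumes q: "q \<ge> 1" and i: "i < n" and x: "x \<in> subsp b m i"
  shows "(1 - eps_q b m n q) * (lq_norm q x)\<^sup>2 \<le> (norm x)\<^sup>2"
    and "(norm x)\<^sup>2 \<le> (1 + eps_q b m n q) * (lq_norm q x)\<^sup>2"
proof -
  define E where "E = {e. \<forall>i<n. \<forall>ci.
      (1 - e) * (lq_norm q (blockvec b m i ci))\<^sup>2 \<le> (norm (blockvec b m i ci))\<^sup>2 \<and>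
      (norm (blockvec b m i ci))\<^sup>2 \<le> (1 + e) * (lq_norm q (blockvec b m i ci))\<^sup>2}"
  have eps: "eps_q b m n q = Inf E" by (simp add: E_def eps_q_def)
  define D where "D = real CARD('d)"
  have "D \<ge> 1" by (simp add: D_def)
  have norm_le: "norm v \<le> D * lq_norm q v" for v :: "real^'d"
  proof -
    have "norm v \<le> (\<Sum>k\<in>UNIV. \<bar>v $ k\<bar>)" by (rule norm_le_l1_cart)
    also have "\<dots> \<le> (\<Sum>k\<in>(UNIV::'d set). lq_norm q v)"
      by (rule sum_mono) (rule abs_component_le_lq_norm[OF q])
    finally show ?thesis by (simp add: D_def)
  qed
  \<comment> \<open>\<open>D\<^sup>2\<close> is an admissible constant, so the infimum is taken over a nonempty set.\<close>
  have "D\<^sup>2 \<in> E"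
    unfolding E_def
  proof (intro CollectI allI impI conjI)
    fix i ci
    let ?v = "blockvec b m i ci"
    have "(1 - D\<^sup>2) * (lq_norm q ?v)\<^sup>2 \<le> 0"
      using \<open>D \<ge> 1\<close> by (intro mult_nonpos_nonneg) auto
    then show "(1 - D\<^sup>2) * (lq_norm q ?v)\<^sup>2 \<le> (norm ?v)\<^sup>2"
      by (meson order_trans zero_le_power2)
    have "(norm ?v)\<^sup>2 \<le> (D * lq_norm q ?v)\<^sup>2"
      using norm_le[of ?v] by (intro power_mono) auto
    also have "\<dots> \<le> (1 + D\<^sup>2) * (lq_norm q ?v)\<^sup>2"
      unfolding power_mult_distrib by (intro mult_right_mono) auto
    finally show "(norm ?v)\<^sup>2 \<le> (1 + D\<^sup>2) * (lq_norm q ?v)\<^sup>2" .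
  qed
  then have "E \<noteq> {}" by auto
  from x obtain ci where xc: "x = blockvec b m i ci" by (auto simp: subsp_eq_range_blockvec)
  consider "x = 0" | "(lq_norm q x)\<^sup>2 > 0"
    using lq_norm_eq_0_iff[OF q, of x] by fastforce
  then have "(1 - eps_q b m n q) * (lq_norm q x)\<^sup>2 \<le> (norm x)\<^sup>2 \<and>
             (norm x)\<^sup>2 \<le> (1 + eps_q b m n q) * (lq_norm q x)\<^sup>2"
  proof cases
    case 2
    have "1 - (norm x)\<^sup>2 / (lq_norm q x)\<^sup>2 \<le> Inf E"
    proof (rule cInf_greatest[OF \<open>E \<noteq> {}\<close>])
      fix e assume "e \<in> E"
      then have "(1 - e) * (lq_norm q x)\<^sup>2 \<le> (norm x)\<^sup>2" using i unfolding E_def xc by blast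
      then show "1 - (norm x)\<^sup>2 / (lq_norm q x)\<^sup>2 \<le> e" using 2 by (simp add: field_simps)
    qed
    moreover have "(norm x)\<^sup>2 / (lq_norm q x)\<^sup>2 - 1 \<le> Inf E"
    proof (rule cInf_greatest[OF \<open>E \<noteq> {}\<close>])
      fix e assume "e \<in> E"
      then have "(norm x)\<^sup>2 \<le> (1 + e) * (lq_norm q x)\<^sup>2" using i unfolding E_def xc by blast
      then show "(norm x)\<^sup>2 / (lq_norm q x)\<^sup>2 - 1 \<le> e" using 2 by (simp add: field_simps)
    qed
    ultimately show ?thesis using 2 by (simp add: eps field_simps)
  qed (simp add: lq_norm_def)
  then show "(1 - eps_q b m n q) * (lq_norm q x)\<^sup>2 \<le> (norm x)\<^sup>2"
    and "(norm x)\<^sup>2 \<le> (1 + eps_q b m n q) * (lq_norm q x)\<^sup>2" by auto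
qed

lemma norm_bounds_eps_q:
  fixes b :: "nat \<Rightarrow> nat \<Rightarrow> real^'d"
  assumes q: "q \<ge> 1" and i: "i < n" and x: "x \<in> subsp b m i"
  shows "sqrt (1 - eps_q b m n q) * lq_norm q x \<le> norm x"
    and "norm x \<le> sqrt (1 + eps_q b m n q) * lq_norm q x"
proof -
  have "sqrt ((1 - eps_q b m n q) * (lq_norm q x)\<^sup>2) \<le> sqrt ((norm x)\<^sup>2)"
    using eps_q_bounds(1)[OF assms] by (rule real_sqrt_le_mono)
  then show "sqrt (1 - eps_q b m n q) * lq_norm q x \<le> norm x"
    using lq_norm_nonneg[of q x] by (simp add: real_sqrt_mult)
  have "sqrt ((norm x)\<^sup>2) \<le> sqrt ((1 + eps_q b m n q) * (lq_norm q x)\<^sup>2)"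
    using eps_q_bounds(2)[OF assms] by (rule real_sqrt_le_mono)
  then show "norm x \<le> sqrt (1 + eps_q b m n q) * lq_norm q x"
    using lq_norm_nonneg[of q x] by (simp add: real_sqrt_mult)
qed

lemma eps_q_nonneg:
  fixes b :: "nat \<Rightarrow> nat \<Rightarrow> real^'d"
  assumes q: "q \<ge> 1" and i: "i < n" and x: "x \<in> subsp b m i" "x \<noteq> 0"
  shows "eps_q b m n q \<ge> 0"
proof -
  have "(lq_norm q x)\<^sup>2 > 0"
    using lq_norm_eq_0_iff[OF q, of x] x by simp
  moreover have "(1 - eps_q b m n q) * (lq_norm q x)\<^sup>2 \<le> (1 + eps_q b m n q) * (lq_norm q x)\<^sup>2"
    using eps_q_bounds[OF q i x(1)] by linarith
  ultimately show ?thesis by simp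
qed

text \<open>Pairing \<open>h i\<close> with \<open>h i = - (\<Sum>j\<noteq>i. h j)\<close> gives \<open>\<parallel>h i\<parallel>\<^sup>2\<close> on the left.\<close>
lemma norm_le_sum_sub_coh:
  fixes h :: "'i \<Rightarrow> real^'d"
  assumes I: "finite I" "i \<in> I" and h: "\<forall>j\<in>I. h j \<in> S j" and sum0: "sum h I = 0"
  shows "norm (h i) \<le> (\<Sum>j\<in>I - {i}. sub_coh (S j) (S i) * norm (h j))"
proof -
  have "sum h I = h i + sum h (I - {i})"
    using I by (intro sum.remove)
  then have hi: "h i = - sum h (I - {i})" using sum0 by (simp add: eq_neg_iff_add_eq_0)
  have "(norm (h i))\<^sup>2 = h i \<bullet> h i" by (simp add: power2_norm_eq_inner)
  also have "\<dots> = - (\<Sum>j\<in>I - {i}. h j \<bullet> h i)"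
    by (subst (1) hi) (simp add: inner_sum_left)
  also have "\<dots> \<le> (\<Sum>j\<in>I - {i}. \<bar>h j \<bullet> h i\<bar>)"
    by (simp add: sum_negf[symmetric] sum_mono)
  also have "\<dots> \<le> (\<Sum>j\<in>I - {i}. sub_coh (S j) (S i) * norm (h j)) * norm (h i)"
    unfolding sum_distrib_right using h I by (intro sum_mono abs_inner_le_sub_coh) auto
  finally have "norm (h i) * norm (h i) \<le> (\<Sum>j\<in>I - {i}. sub_coh (S j) (S i) * norm (h j)) * norm (h i)"
    by (simp add: power2_eq_square)
  moreover have "0 \<le> (\<Sum>j\<in>I - {i}. sub_coh (S j) (S i) * norm (h j))"
    by (intro sum_nonneg mult_nonneg_nonneg sub_coh_nonneg norm_ge_zero)
  ultimately show ?thesis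
    by (cases "norm (h i) = 0") auto
qed

lemma sum_norm_le_zeta:
  fixes b :: "nat \<Rightarrow> nat \<Rightarrow> real^'d"
  assumes k: "0 < k" and L: "L \<subseteq> {..<n}" "card L = k"
    and h: "\<forall>i<n. h i \<in> subsp b m i" and sum0: "(\<Sum>i<n. h i) = 0"
  shows "(\<Sum>i\<in>L. norm (h i))
    \<le> zeta b m n (k - 1) * (\<Sum>i\<in>L. norm (h i)) + zeta b m n k * (\<Sum>i\<in>{..<n} - L. norm (h i))"
proof -
  have finL: "finite L" using L finite_subset by blast
  define \<mu> where "\<mu> j i = sub_coh (subsp b m j) (subsp b m i)" for j i
  define w where "w j = (\<Sum>i\<in>{i\<in>L. i \<noteq> j}. \<mu> j i)" for j
  have w_off: "w j \<le> zeta b m n k" if "j \<in> {..<n} - L" for j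
  proof -
    have "{i\<in>L. i \<noteq> j} = L" using that by auto
    then show ?thesis
      unfolding w_def \<mu>_def using sum_sub_coh_le_zeta[of k L n j b m] k L that by auto
  qed
  have w_on: "w j \<le> zeta b m n (k - 1)" if j: "j \<in> L" for j
  proof -
    have set: "{i\<in>L. i \<noteq> j} = L - {j}" by auto
    have card: "card (L - {j}) = k - 1" using j L finL by simp
    show ?thesis
    proof (cases "k = 1")
      case True
      then have "L - {j} = {}" using card finL by simp
      then show ?thesis using True unfolding w_def set \<open>L - {j} = {}\<close> by (simp add: zeta_def)
    next
      case False
      then show ?thesis
        unfolding w_def \<mu>_def set using sum_sub_coh_le_zeta[of "k - 1" "L - {j}" n j b m] k L j card
        by auto
    qed
  qed
  have "(\<Sum>i\<in>L. norm (h i)) \<le> (\<Sum>i\<in>L. \<Sum>j\<in>{j\<in>{..<n}. i \<noteq> j}. \<mu> j i * norm (h j))"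
  proof (rule sum_mono)
    fix i assume "i \<in> L"
    then have "norm (h i) \<le> (\<Sum>j\<in>{..<n} - {i}. \<mu> j i * norm (h j))"
      unfolding \<mu>_def using L h sum0 by (intro norm_le_sum_sub_coh) auto
    moreover have "{..<n} - {i} = {j\<in>{..<n}. i \<noteq> j}" by auto
    ultimately show "norm (h i) \<le> (\<Sum>j\<in>{j\<in>{..<n}. i \<noteq> j}. \<mu> j i * norm (h j))" by simp
  qed
  also have "\<dots> = (\<Sum>j<n. \<Sum>i\<in>{i\<in>L. i \<noteq> j}. \<mu> j i * norm (h j))"
    using finL by (rule sum.swap_restrict) simp
  also have "\<dots> = (\<Sum>j<n. norm (h j) * w j)"
    by (simp add: w_def sum_distrib_left mult.commute)
  also have "\<dots> = (\<Sum>j\<in>{..<n} - L. norm (h j) * w j) + (\<Sum>j\<in>L. norm (h j) * w j)"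
    using L by (intro sum.subset_diff) auto
  also have "\<dots> \<le> (\<Sum>j\<in>{..<n} - L. norm (h j) * zeta b m n k) + (\<Sum>j\<in>L. norm (h j) * zeta b m n (k - 1))"
    using w_off w_on by (intro add_mono sum_mono mult_left_mono) auto
  finally show ?thesis
    unfolding sum_distrib_right[symmetric] by (simp add: mult.commute)
qed

text \<open>With \<open>t = sqrt ((1 - e) / (1 + e))\<close> in \<open>[0, 1]\<close>: \<open>Z < t\<^sup>2 - Z' \<le> t - Z' \<le> (1 - Z') t\<close>.\<close>
lemma zeta_condition_sqrt_bound:
  fixes e Z Z' :: real
  assumes e: "0 \<le> e" and Z: "0 \<le> Z" and Z': "0 \<le> Z'"
    and cond: "Z + Z' < (1 - e) / (1 + e)"
  shows "Z * sqrt (1 + e) < (1 - Z') * sqrt (1 - e)"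
proof -
  have "e < 1"
  proof (rule ccontr)
    assume "\<not> e < 1"
    then have "(1 - e) / (1 + e) \<le> 0" using e by (intro divide_nonpos_pos) auto
    with cond Z Z' show False by linarith
  qed
  define t where "t = sqrt (1 - e) / sqrt (1 + e)"
  have s: "sqrt (1 + e) > 0" using e by simp
  have t: "0 \<le> t" "t \<le> 1"
    using e \<open>e < 1\<close> s by (auto simp: t_def divide_le_eq_1)
  have "t * t = (1 - e) / (1 + e)"
    using e \<open>e < 1\<close> by (simp add: t_def real_sqrt_divide[symmetric] flip: real_sqrt_mult)
  with cond have "Z < t * t - Z'" by simp
  also have "\<dots> \<le> (1 - Z') * t"
    using mult_left_le[OF t(2) Z'] mult_left_le[OF t(2) t(1)] by (simp add: algebra_simps)
  finally have "Z * sqrt (1 + e) < (1 - Z') * t * sqrt (1 + e)"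
    using s by simp
  then show ?thesis using s by (simp add: t_def)
qed

lemma block_null_space_property:
  fixes b :: "nat \<Rightarrow> nat \<Rightarrow> real^'d"
  assumes q: "q \<ge> 1" and k: "0 < k" "k < n" and L: "L \<subseteq> {..<n}" "card L = k"
    and eps: "0 \<le> eps_q b m n q"
    and cond: "zeta b m n k + zeta b m n (k - 1) < (1 - eps_q b m n q) / (1 + eps_q b m n q)"
    and h: "\<forall>i<n. h i \<in> subsp b m i" and sum0: "(\<Sum>i<n. h i) = 0"
    and off_le: "(\<Sum>i\<in>{..<n} - L. lq_norm q (h i)) \<le> (\<Sum>i\<in>L. lq_norm q (h i))"
  shows "\<forall>i<n. h i = 0"
proof -
  define e where "e = eps_q b m n q"
  define Z where "Z = zeta b m n k"
  define Z' where "Z' = zeta b m n (k - 1)"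
  define A where "A = (\<Sum>i\<in>L. lq_norm q (h i))"
  define B where "B = (\<Sum>i\<in>{..<n} - L. lq_norm q (h i))"
  have Z: "Z \<ge> 0" "Z' \<ge> 0" using k by (simp_all add: Z_def Z'_def zeta_nonneg)
  have "(1 - e) / (1 + e) \<le> 1" using eps by (simp add: e_def divide_le_eq_1)
  with cond Z have Z'_le: "1 - Z' \<ge> 0" by (simp add: Z_def Z'_def e_def)
  have "sqrt (1 - e) * A \<le> (\<Sum>i\<in>L. norm (h i))"
    unfolding A_def e_def sum_distrib_left using q L h by (intro sum_mono norm_bounds_eps_q) auto
  then have "(1 - Z') * (sqrt (1 - e) * A) \<le> (1 - Z') * (\<Sum>i\<in>L. norm (h i))"
    using Z'_le by (rule mult_left_mono)
  also have "\<dots> \<le> Z * (\<Sum>i\<in>{..<n} - L. norm (h i))"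
    using sum_norm_le_zeta[OF k(1) L h sum0] by (simp add: Z_def Z'_def algebra_simps)
  also have "\<dots> \<le> Z * (sqrt (1 + e) * B)"
    unfolding B_def e_def sum_distrib_left using q h Z
    by (intro mult_left_mono sum_mono norm_bounds_eps_q) auto
  also have "\<dots> \<le> Z * (sqrt (1 + e) * A)"
    using off_le Z eps by (intro mult_left_mono) (auto simp: A_def B_def e_def)
  finally have "(1 - Z') * sqrt (1 - e) * A \<le> Z * sqrt (1 + e) * A"
    by (simp add: mult.assoc)
  moreover have "Z * sqrt (1 + e) < (1 - Z') * sqrt (1 - e)"
    using zeta_condition_sqrt_bound[OF eps Z] cond by (simp add: e_def Z_def Z'_def add.commute)
  moreover have "A \<ge> 0" "B \<ge> 0" unfolding A_def B_def by (simp_all add: sum_nonneg lq_norm_nonneg)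
  ultimately have "A = 0"
    using mult_le_cancel_right_pos[of A "(1 - Z') * sqrt (1 - e)" "Z * sqrt (1 + e)"] by fastforce
  with off_le \<open>B \<ge> 0\<close> have "B = 0" by (simp add: A_def B_def)
  with \<open>A = 0\<close> have "lq_norm q (h i) = 0" if "i < n" for i
    using that L finite_subset[OF L(1)] unfolding A_def B_def
    by (cases "i \<in> L") (simp_all add: sum_nonneg_eq_0_iff lq_norm_nonneg)
  then show ?thesis using lq_norm_eq_0_iff[OF q] by blast
qed

lemma lq_norm_minus_commute:
  fixes x y :: "real^'d" assumes q: "q \<ge> 1"
  shows "lq_norm q (x - y) = lq_norm q (y - x)"
  using lq_norm_scaleR[OF q, of "-1" "y - x"] by simp

text \<open>Comparing \<open>c\<close> with the feasible point given by \<open>s\<close>, the triangle inequality on \<open>L\<close>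
  turns optimality into a bound on the mass of \<open>c\<close> outside \<open>L\<close>.\<close>
lemma opt_lq_l1_off_support_le:
  fixes b :: "nat \<Rightarrow> nat \<Rightarrow> real^'d"
  assumes q: "q \<ge> 1" and L: "L \<subseteq> {..<n}" and s: "\<forall>i\<in>L. s i \<in> subsp b m i"
    and opt: "opt_lq_l1 b m n q (\<Sum>i\<in>L. s i) c"
  shows "(\<Sum>i\<in>{..<n} - L. lq_norm q (blockvec b m i (c i)))
    \<le> (\<Sum>i\<in>L. lq_norm q (blockvec b m i (c i) - s i))"
proof -
  define z where "z i = blockvec b m i (c i)" for i
  have split: "sum g {..<n} = sum g ({..<n} - L) + sum g L" for g :: "nat \<Rightarrow> 'a::comm_monoid_add"
    using L by (intro sum.subset_diff) auto
  have "(if i \<in> L then s i else 0) \<in> range (blockvec b m i)" for i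
    using s by (simp add: subsp_eq_range_blockvec[symmetric] subsp_def span_zero)
  then have "\<forall>i. \<exists>ci. blockvec b m i ci = (if i \<in> L then s i else 0)"
    by (metis rangeE)
  then obtain c' where c': "\<And>i. blockvec b m i (c' i) = (if i \<in> L then s i else 0)"
    by (metis choice)
  have "dict_synth b m n c' = (\<Sum>i\<in>L. s i)"
    unfolding dict_synth_def c' split by simp
  with opt have "(\<Sum>i<n. lq_norm q (z i)) \<le> (\<Sum>i<n. lq_norm q (blockvec b m i (c' i)))"
    unfolding opt_lq_l1_def z_def by metis
  also have "\<dots> = (\<Sum>i\<in>L. lq_norm q (s i))"
    unfolding c' split by (simp add: lq_norm_def)
  also have "\<dots> \<le> (\<Sum>i\<in>L. lq_norm q (z i) + lq_norm q (z i - s i))"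
  proof (rule sum_mono)
    fix i
    have "lq_norm q (s i) = lq_norm q (z i + (s i - z i))" by simp
    also have "\<dots> \<le> lq_norm q (z i) + lq_norm q (s i - z i)" by (rule lq_norm_triangle[OF q])
    finally show "lq_norm q (s i) \<le> lq_norm q (z i) + lq_norm q (z i - s i)"
      using lq_norm_minus_commute[OF q, of "s i" "z i"] by simp
  qed
  finally show ?thesis
    unfolding split sum.distrib z_def by simp
qed

theorem proposition4:
  fixes b :: "nat \<Rightarrow> nat \<Rightarrow> real^'d" and m :: "nat \<Rightarrow> nat" and n k :: nat and q :: real
  assumes q: "q \<ge> 1"
    and k: "0 < k" "k < n"
    and blocks_nonempty: "\<forall>i<n. 0 < m i"
    and unit_cols: "\<forall>i<n. \<forall>j<m i. norm (b i j) = 1"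
    and disjoint: "\<forall>i<n. \<forall>j<n. i \<noteq> j \<longrightarrow> subsp b m i \<inter> subsp b m j = {0}"
    and uniq: "unique_ksparse b m n k"
    and cond: "zeta b m n k + zeta b m n (k - 1) < (1 - eps_q b m n q) / (1 + eps_q b m n q)"
  shows "\<forall>L y c. L \<subseteq> {..<n} \<and> card L = k \<and>
            y \<in> {(\<Sum>i\<in>L. s i) | s. \<forall>i\<in>L. s i \<in> subsp b m i} \<and>
            opt_lq_l1 b m n q y c
          \<longrightarrow> (\<forall>i<n. i \<notin> L \<longrightarrow> blockvec b m i (c i) = 0)"
proof (intro allI impI)
  fix L y c i
  assume "L \<subseteq> {..<n} \<and> card L = k \<and>
    y \<in> {(\<Sum>i\<in>L. s i) | s. \<forall>i\<in>L. s i \<in> subsp b m i} \<and> opt_lq_l1 b m n q y c"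
    and i: "i < n" "i \<notin> L"
  then obtain s where L: "L \<subseteq> {..<n}" "card L = k" and s: "\<forall>i\<in>L. s i \<in> subsp b m i"
    and opt: "opt_lq_l1 b m n q (\<Sum>i\<in>L. s i) c" by blast
  define h where "h i = blockvec b m i (c i) - (if i \<in> L then s i else 0)" for i
  have "blockvec b m i (c i) \<in> subsp b m i" for i
    by (simp add: subsp_eq_range_blockvec)
  with s have h_sub: "\<forall>i<n. h i \<in> subsp b m i"
    unfolding h_def subsp_def by (auto intro: span_diff)
  have "(\<Sum>i<n. h i) = (\<Sum>i\<in>L. s i) - (\<Sum>i\<in>L. s i)"
    using opt L unfolding h_def sum_subtractf opt_lq_l1_def dict_synth_def
    by (simp add: sum.If_cases Int_absorb1)
  then have h_sum: "(\<Sum>i<n. h i) = 0" by simp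
  have "(\<Sum>i\<in>{..<n} - L. lq_norm q (h i)) \<le> (\<Sum>i\<in>L. lq_norm q (h i))"
    using opt_lq_l1_off_support_le[OF q L(1) s opt] by (simp add: h_def)
  moreover have "0 \<le> eps_q b m n q"
  proof (rule eps_q_nonneg[OF q])
    show "0 < n" "b 0 0 \<in> subsp b m 0"
      using k blocks_nonempty by (auto simp: subsp_def intro: span_base)
    have "norm (b 0 0) = 1" using k blocks_nonempty unit_cols by auto
    then show "b 0 0 \<noteq> 0" by auto
  qed
  ultimately have "\<forall>i<n. h i = 0"
    using block_null_space_property[OF q k L _ cond h_sub h_sum] by blast
  then show "blockvec b m i (c i) = 0"
    using i by (simp add: h_def)
qed

end
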